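(* Let $m=2^{l_m}$ with $l_m\ge 1$, let $(v_0,\dots,v_{m-1})$ be a Cantor basis of $\mathbb{F}_{2^m}$, and let $l$ be an integer with $0\le l<m/2$. Put $n=m\cdot 2^l$ and $$\Sigma := v_{l+m/2}+V_l=\{v_{l+m/2}+u : u\in V_l\},\qquad \Omega:=\Sigma\cup\phi_2(\Sigma)\cup\phi_2^{\circ 2}(\Sigma)\cup\cdots\cup\phi_2^{\circ(m-1)}(\Sigma).$$ Then $\mathrm{Ord}_{\phi_2}(\Sigma)=m$, the sets $\Sigma,\phi_2(\Sigma),\dots,\phi_2^{\circ(m-1)}(\Sigma)$ are pairwise disjoint (so $\Sigma$ is a Frobenius partition of $\Omega$), and $|\Omega|=n$.
   Context: A Cantor basis of $\mathbb{F}_{2^m}$ (for $m$ a power of $2$) is an $\mathbb{F}_2$-basis $(v_0,\dots,v_{m-1})$ of $\mathbb{F}_{2^m}$ with $v_0=1$ and $v_i^2+v_i=v_{i-1}$ for $0<i<m$. For $0\le i\le m$ let $V_0=\{0\}$ and $V_i=\mathrm{span}_{\mathbb{F}_2}\{v_0,\dots,v_{i-1}\}$. $\phi_2:\mathbb{F}_{2^m}\to\mathbb{F}_{2^m}$, $a\mapsto a^2$, is the Frobenius map; $\phi_2^{\circ j}$ denotes its $j$-fold iterate, and for a set $S$, $\phi_2(S)=\{\phi_2(s):s\in S\}$. For a set $S\subseteq\mathbb{F}_{2^m}$, $\mathrm{Ord}_{\phi_2}(S)$ is the least positive integer $j$ with $\phi_2^{\circ j}(S)=S$. Given $\mathrm{Ord}_{\phi_2}(\Sigma)=j$,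 $\Sigma$ is called a Frobenius partition of $\Omega$ if $\Omega=\Sigma\cup\phi_2(\Sigma)\cup\dots\cup\phi_2^{\circ(j-1)}(\Sigma)$ with these $j$ sets pairwise disjoint. *)

theory Defs
  imports Main
begin

text \<open>F2-span of v_0,...,v_{i-1}: all subset sums (coefficients in F_2).\<close>
definition Vspan :: "(nat \<Rightarrow> 'a::field) \<Rightarrow> nat \<Rightarrow> 'a set" where
  "Vspan v i = {(\<Sum>j\<in>J. v j) | J. J \<subseteq> {..<i}}"

text \<open>Cantor basis of a field of order 2^m: an F2-basis (every element is a unique
  F2-combination of v_0..v_{m-1}) with v_0 = 1 and v_i^2 + v_i = v_{i-1}.\<close>
definition cantor_basis :: "nat \<Rightarrow> (nat \<Rightarrow> 'a::field) \<Rightarrow> bool" where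
  "cantor_basis m v \<longleftrightarrow>
     bij_betw (\<lambda>J. \<Sum>j\<in>J. v j) (Pow {..<m}) (UNIV :: 'a set) \<and>
     v 0 = 1 \<and> (\<forall>i. 0 < i \<and> i < m \<longrightarrow> v i ^ 2 + v i = v (i - 1))"

definition frob :: "'a::field \<Rightarrow> 'a" where
  "frob a = a ^ 2"

definition ord_frob :: "'a::field set \<Rightarrow> nat" where
  "ord_frob S = (LEAST j. 0 < j \<and> (frob ^^ j) ` S = S)"

definition frobenius_partition :: "'a::field set \<Rightarrow> 'a set \<Rightarrow> bool" where
  "frobenius_partition \<Sigma> \<Omega> \<longleftrightarrow>
     \<Omega> = (\<Union>k<ord_frob \<Sigma>. (frob ^^ k) ` \<Sigma>) \<and>
     (\<forall>i<ord_frob \<Sigma>. \<forall>k<ord_frob \<Sigma>. i \<noteq> k \<longrightarrow>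
        (frob ^^ i) ` \<Sigma> \<inter> (frob ^^ k) ` \<Sigma> = {})"

end

theory Submission
  imports Defs HOL.Modules "HOL-Computational_Algebra.Primes"
begin

text \<open>In characteristic 2 the map \<open>L x = x^2 + x\<close> is additive, commutes with the Frobenius
  map \<open>\<phi>\<close>, and the Cantor basis relations say that \<open>L\<close> shifts the basis down:
  \<open>L v\<^sub>j = v\<^sub>j\<^sub>-\<^sub>1\<close> and \<open>L v\<^sub>0 = 0\<close>. Hence the kernel of \<open>L^l\<close> is \<open>V\<^sub>l\<close>, so \<open>\<Sigma>\<close> is the fibre of \<open>L^l\<close>
  over \<open>c = v\<^sub>m\<^sub>/\<^sub>2\<close>, and \<open>\<phi>^j(\<Sigma>)\<close> is the fibre over \<open>\<phi>^j(c)\<close>. Since \<open>\<phi> = L + id\<close>, in characteristic 2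
  \<open>\<phi>^(2^t) = L^(2^t) + id\<close>; thus \<open>\<phi>^m(c) = c\<close> while \<open>\<phi>^(m/2)(c) = c + 1\<close>, so the orbit of \<open>c\<close> has
  exactly \<open>m\<close> points. Fibres over distinct points are disjoint translates of \<open>V\<^sub>l\<close>, of size \<open>2^l\<close>.\<close>

lemma two_eq_zero_if_card_power_of_two:
  assumes "card (UNIV :: 'a::{finite,field} set) = 2 ^ m" and "m \<ge> 1"
  shows "(2::'a) = 0"
proof -
  have "(\<Sum>x\<in>UNIV. x) = (\<Sum>x\<in>UNIV. x + (1::'a))"
    by (rule sum.reindex_bij_witness[where i = "\<lambda>x. x + 1" and j = "\<lambda>x. x - 1"]) auto
  also have "\<dots> = (\<Sum>x\<in>UNIV. x) + of_nat (card (UNIV :: 'a set))"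
    by (simp add: sum.distrib)
  finally have "(2::'a) ^ m = 0"
    using assms(1) by simp
  then show ?thesis
    by (metis power_eq_0_iff)
qed

lemma add_self_eq_zero_char_two:
  assumes "(2::'a::field) = 0"
  shows "x + x = (0::'a)"
  by (metis assms mult_2 mult_zero_left)

lemma frob_add_char_two:
  assumes "(2::'a::field) = 0"
  shows "frob (a + b) = frob a + frob (b::'a)"
proof -
  have "frob (a + b) = frob a + frob b + (a * b + a * b)"
    by (simp add: frob_def power2_eq_square algebra_simps)
  then show ?thesis
    using add_self_eq_zero_char_two[OF assms] by simp
qed

lemma bij_frob_char_two:
  assumes "(2::'a::{finite,field}) = 0"
  shows "bij (frob :: 'a \<Rightarrow> 'a)"
proof -
  have "inj (frob :: 'a \<Rightarrow> 'a)"
  proof (rule injI)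
    fix a b :: 'a
    assume "frob a = frob b"
    then have "frob (a + b) = 0"
      by (simp add: frob_add_char_two[OF assms] add_self_eq_zero_char_two[OF assms])
    then have "a + b = 0"
      by (simp add: frob_def)
    then show "a = b"
      by (metis add_self_eq_zero_char_two[OF assms] add_right_cancel)
  qed
  then show ?thesis
    by (simp add: bij_def finite_UNIV_inj_surj)
qed

definition artin_schreier :: "'a::field \<Rightarrow> 'a" where
  "artin_schreier x = x ^ 2 + x"

lemma additive_artin_schreier_char_two:
  assumes "(2::'a::field) = 0"
  shows "additive (artin_schreier :: 'a \<Rightarrow> 'a)"
  by standard
    (simp add: frob_add_char_two[OF assms, unfolded frob_def] artin_schreier_def algebra_simps)

lemma frob_artin_schreier_char_two:
  assumes "(2::'a::field) = 0"
  shows "frob (artin_schreier x) = artin_schreier (frob (x::'a))"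
  using frob_add_char_two[OF assms, of "x ^ 2" x]
  by (simp add: artin_schreier_def frob_def power2_eq_square)

lemma additive_funpow:
  fixes f :: "'a::ab_group_add \<Rightarrow> 'a"
  assumes "additive f"
  shows "additive (f ^^ n)"
proof
  show "(f ^^ n) (x + y) = (f ^^ n) x + (f ^^ n) y" for x y
    by (induction n) (simp_all add: additive.add[OF assms])
qed

lemma funpow_commute_funpow:
  assumes "\<And>x. f (g x) = g (f x)"
  shows "(f ^^ i) ((g ^^ j) x) = (g ^^ j) ((f ^^ i) x)"
proof -
  have f_comm: "f ((g ^^ j) y) = (g ^^ j) (f y)" for y
    by (induction j) (simp_all add: assms)
  show ?thesis
    by (induction i) (simp_all add: f_comm)
qed

lemma frob_funpow_two_power_char_two:
  assumes "(2::'a::field) = 0"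
  shows "(frob ^^ (2 ^ t)) (x::'a) = (artin_schreier ^^ (2 ^ t)) x + x"
proof (induction t arbitrary: x)
  case 0
  show ?case
    by (simp add: artin_schreier_def frob_def add.assoc add_self_eq_zero_char_two[OF assms])
next
  case (Suc t)
  let ?L = "artin_schreier ^^ (2 ^ t) :: 'a \<Rightarrow> 'a"
  interpret L: additive ?L
    by (rule additive_funpow[OF additive_artin_schreier_char_two[OF assms]])
  have split: "(2::nat) ^ Suc t = 2 ^ t + 2 ^ t"
    by simp
  have "(frob ^^ (2 ^ Suc t)) x = ?L (?L x + x) + (?L x + x)"
    by (simp only: split funpow_add comp_apply Suc)
  also have "\<dots> = ?L (?L x) + (?L x + ?L x) + x"
    by (simp add: L.add algebra_simps)
  also have "\<dots> = (artin_schreier ^^ (2 ^ Suc t)) x + x"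
    by (simp only: split funpow_add comp_apply add_self_eq_zero_char_two[OF assms] add_0_right)
  finally show ?case .
qed

lemma cantor_basis_artin_schreier_funpow:
  assumes "cantor_basis m v" and "(2::'a::field) = 0" and "j < m"
  shows "(artin_schreier ^^ i) ((v::nat \<Rightarrow> 'a) j) = (if i \<le> j then v (j - i) else 0)"
proof (induction i)
  case 0
  show ?case by simp
next
  case (Suc i)
  have v0: "v 0 = 1" and step: "\<And>i. 0 < i \<Longrightarrow> i < m \<Longrightarrow> artin_schreier (v i) = v (i - 1)"
    using assms(1) by (auto simp: cantor_basis_def artin_schreier_def)
  consider "Suc i \<le> j" | "i = j" | "j < i"
    by linarith
  then show ?case
  proof cases
    case 1
    then show ?thesis
      using Suc step[of "j - i"] assms(3) by simp
  next
    case 2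
    then show ?thesis
      using Suc v0 assms(2) by (simp add: artin_schreier_def)
  qed (use Suc in \<open>simp add: artin_schreier_def\<close>)
qed

lemma Vspan_eq_image_Pow: "Vspan v l = sum v ` Pow {..<l}"
  unfolding Vspan_def by auto

lemma card_Vspan_cantor_basis:
  assumes "cantor_basis m v" and "l \<le> m"
  shows "card (Vspan v l) = 2 ^ l"
proof -
  have "inj_on (sum v) (Pow {..<m})"
    using assms(1) by (simp add: cantor_basis_def bij_betw_def)
  then have "inj_on (sum v) (Pow {..<l})"
    by (rule inj_on_subset) (use assms(2) in auto)
  then show ?thesis
    by (simp add: Vspan_eq_image_Pow card_image card_Pow)
qed

lemma artin_schreier_funpow_sum_cantor_basis:
  assumes cb: "cantor_basis m v" and char: "(2::'a::field) = 0" and J: "J \<subseteq> {..<m}"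
  shows "(artin_schreier ^^ l) (sum (v::nat \<Rightarrow> 'a) J) = sum v ((\<lambda>j. j - l) ` (J \<inter> {l..}))"
proof -
  interpret L: additive "artin_schreier ^^ l :: 'a \<Rightarrow> 'a"
    by (rule additive_funpow[OF additive_artin_schreier_char_two[OF char]])
  have "finite J"
    using J finite_subset by blast
  have "(artin_schreier ^^ l) (sum v J) = (\<Sum>j\<in>J. if l \<le> j then v (j - l) else 0)"
    using J by (auto simp: L.sum cantor_basis_artin_schreier_funpow[OF cb char] intro!: sum.cong)
  also have "\<dots> = (\<Sum>j\<in>J \<inter> {l..}. v (j - l))"
    using \<open>finite J\<close> by (simp add: sum.If_cases Int_def)
  also have "\<dots> = sum v ((\<lambda>j. j - l) ` (J \<inter> {l..}))"
    by (subst sum.reindex) (auto simp: inj_on_def)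
  finally show ?thesis .
qed

lemma kernel_artin_schreier_funpow_cantor_basis:
  assumes cb: "cantor_basis m v" and char: "(2::'a::field) = 0" and "l \<le> m"
  shows "{x. (artin_schreier ^^ l) x = 0} = Vspan (v::nat \<Rightarrow> 'a) l"
proof -
  have bij: "bij_betw (sum v) (Pow {..<m}) UNIV"
    using cb by (simp add: cantor_basis_def)
  note L_sum = artin_schreier_funpow_sum_cantor_basis[OF cb char]
  show ?thesis
  proof (intro equalityI subsetI)
    fix x :: 'a
    assume "x \<in> {x. (artin_schreier ^^ l) x = 0}"
    moreover obtain J where J: "J \<subseteq> {..<m}" "x = sum v J"
      using bij_betw_imp_surj_on[OF bij] by (metis PowD UNIV_I imageE)
    ultimately have "sum v ((\<lambda>j. j - l) ` (J \<inter> {l..})) = sum v {}"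
      using L_sum[OF J(1)] by simp
    moreover have "(\<lambda>j. j - l) ` (J \<inter> {l..}) \<in> Pow {..<m}"
      using J(1) by auto
    ultimately have "(\<lambda>j. j - l) ` (J \<inter> {l..}) = {}"
      using bij_betw_imp_inj_on[OF bij] unfolding inj_on_def by blast
    then have "J \<subseteq> {..<l}"
      by auto
    then show "x \<in> Vspan v l"
      using J(2) by (auto simp: Vspan_eq_image_Pow)
  next
    fix x
    assume "x \<in> Vspan v l"
    then obtain J where "J \<subseteq> {..<l}" "x = sum v J"
      by (auto simp: Vspan_eq_image_Pow)
    moreover have "J \<subseteq> {..<m}" and "J \<inter> {l..} = {}"
      using \<open>J \<subseteq> {..<l}\<close> assms(3) by auto
    ultimately show "x \<in> {x. (artin_schreier ^^ l) x = 0}"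
      using L_sum[OF \<open>J \<subseteq> {..<m}\<close>] by simp
  qed
qed

lemma (in additive) fibre_eq_translate_kernel:
  assumes "f w = c"
  shows "{x. f x = c} = (\<lambda>u. w + u) ` {x. f x = 0}"
proof (intro equalityI subsetI)
  fix x
  assume "x \<in> {x. f x = c}"
  then have "x - w \<in> {x. f x = 0}"
    using assms by (simp add: diff)
  then show "x \<in> (\<lambda>u. w + u) ` {x. f x = 0}"
    by (rule rev_image_eqI) simp
qed (use assms in \<open>auto simp: add\<close>)

lemma image_fibre_commuting_bij:
  assumes "bij g" and "\<And>x. g (f x) = f (g x)"
  shows "g ` {x. f x = c} = {y. f y = g c}"
proof (intro equalityI subsetI)
  fix y
  assume "y \<in> {y. f y = g c}"
  moreover obtain x where "y = g x"
    using bij_is_surj[OF assms(1)] by blast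
  ultimately have "g (f x) = g c"
    by (simp add: assms(2))
  then have "f x = c"
    using bij_is_inj[OF assms(1)] by (simp add: inj_eq)
  then show "y \<in> g ` {x. f x = c}"
    using \<open>y = g x\<close> by blast
qed (use assms(2) in auto)

text \<open>The least period \<open>p\<close> of \<open>x\<close> divides \<open>2^n\<close>; if \<open>p < 2^n\<close> it would also divide \<open>2^(n-1)\<close>.\<close>

lemma funpow_not_fixed_below_two_power_period:
  assumes "(g ^^ (2 ^ n)) x = x" and "(g ^^ (2 ^ (n - 1))) x \<noteq> x"
    and "0 < d" and "d < 2 ^ n"
  shows "(g ^^ d) x \<noteq> x"
proof
  assume fixed: "(g ^^ d) x = x"
  define p where "p = (LEAST p. 0 < p \<and> (g ^^ p) x = x)"
  have p: "0 < p" "(g ^^ p) x = x"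
    unfolding p_def by (rule LeastI2[of _ d]; use fixed assms(3) in simp)+
  have "p \<le> d"
    unfolding p_def by (rule Least_le) (use fixed assms(3) in simp)
  have period_dvd: "p dvd k" if "(g ^^ k) x = x" for k
  proof -
    have "(g ^^ (k mod p)) x = x"
      using funpow_mod_eq[where f = g and n = p and m = k] p that by simp
    then have "\<not> (0 < k mod p)"
      using not_less_Least[of "k mod p" "\<lambda>p. 0 < p \<and> (g ^^ p) x = x"] p(1)
      unfolding p_def[symmetric] by auto
    then show ?thesis
      by (simp add: dvd_eq_mod_eq_0)
  qed
  obtain i where "i \<le> n" "p = 2 ^ i"
    using period_dvd[OF assms(1)] divides_primepow_nat[of 2 p n] by auto
  moreover have "i \<noteq> n"
    using \<open>p \<le> d\<close> assms(4) calculation by auto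
  ultimately have "p dvd 2 ^ (n - 1)"
    by (simp add: le_imp_power_dvd)
  then have "(g ^^ (2 ^ (n - 1))) x = x"
    using funpow_mod_eq[where f = g and n = p and m = "2 ^ (n - 1)"] p(2) by simp
  with assms(2) show False ..
qed

lemma inj_on_funpow_two_power_period:
  assumes "inj g" and "(g ^^ (2 ^ n)) x = x" and "(g ^^ (2 ^ (n - 1))) x \<noteq> x"
  shows "inj_on (\<lambda>i. (g ^^ i) x) {..<2 ^ n}"
proof -
  have "(g ^^ i) x \<noteq> (g ^^ j) x" if "i < j" "j < 2 ^ n" for i j
  proof
    assume "(g ^^ i) x = (g ^^ j) x"
    then have "(g ^^ i) x = (g ^^ i) ((g ^^ (j - i)) x)"
      using that by (metis funpow_add le_add_diff_inverse less_imp_le comp_apply)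
    then have "(g ^^ (j - i)) x = x"
      using inj_fn[OF assms(1)] by (simp add: inj_eq)
    then show False
      using funpow_not_fixed_below_two_power_period[OF assms(2,3), of "j - i"] that by simp
  qed
  then show ?thesis
    unfolding inj_on_def by (metis lessThan_iff linorder_neqE_nat)
qed

lemma frob_orbit_cantor_basis_middle:
  assumes cb: "cantor_basis m v" and char: "(2::'a::{finite,field}) = 0"
    and "lm \<ge> 1" and m: "m = 2 ^ lm"
  shows "(frob ^^ m) (v (m div 2)) = (v::nat \<Rightarrow> 'a) (m div 2)"
    and "inj_on (\<lambda>j. (frob ^^ j) (v (m div 2))) {..<m}"
proof -
  obtain n where lm: "lm = Suc n"
    using assms(3) by (cases lm) auto
  have half: "m div 2 = 2 ^ (lm - 1)" "m div 2 < m"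
    using m lm by simp_all
  have "(artin_schreier ^^ m) (v (m div 2)) = 0"
    using cantor_basis_artin_schreier_funpow[OF cb char half(2), of m] half(2) by simp
  then have fixed: "(frob ^^ (2 ^ lm)) (v (m div 2)) = v (m div 2)"
    using frob_funpow_two_power_char_two[OF char, of lm] m by simp
  then show "(frob ^^ m) (v (m div 2)) = v (m div 2)"
    using m by simp
  have "v 0 = 1"
    using cb by (simp add: cantor_basis_def)
  then have "(frob ^^ (2 ^ (lm - 1))) (v (m div 2)) = 1 + v (m div 2)"
    using frob_funpow_two_power_char_two[OF char, of "lm - 1"]
      cantor_basis_artin_schreier_funpow[OF cb char half(2), of "m div 2"] half(1) by simp
  then have "(frob ^^ (2 ^ (lm - 1))) (v (m div 2)) \<noteq> v (m div 2)"
    by simp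
  with fixed show "inj_on (\<lambda>j. (frob ^^ j) (v (m div 2))) {..<m}"
    using inj_on_funpow_two_power_period[OF bij_is_inj[OF bij_frob_char_two[OF char]]] m
    by simp
qed

lemma frob_image_translate_Vspan_cantor_basis:
  assumes cb: "cantor_basis m v" and char: "(2::'a::{finite,field}) = 0" and "l + k < m"
  shows "(frob ^^ j) ` ((\<lambda>u. v (l + k) + u) ` Vspan v l)
    = {x. (artin_schreier ^^ l) x = (frob ^^ j) ((v::nat \<Rightarrow> 'a) k)}"
proof -
  interpret L: additive "artin_schreier ^^ l :: 'a \<Rightarrow> 'a"
    by (rule additive_funpow[OF additive_artin_schreier_char_two[OF char]])
  have "(artin_schreier ^^ l) (v (l + k)) = v k"
    using cantor_basis_artin_schreier_funpow[OF cb char assms(3)] by simp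
  then have "(\<lambda>u. v (l + k) + u) ` Vspan v l = {x. (artin_schreier ^^ l) x = v k}"
    using L.fibre_eq_translate_kernel[of "v (l + k)"]
      kernel_artin_schreier_funpow_cantor_basis[OF cb char, of l] assms(3) by simp
  moreover have "(frob ^^ j) ((artin_schreier ^^ l) x) = (artin_schreier ^^ l) ((frob ^^ j) x)"
    for x :: 'a
    by (rule funpow_commute_funpow) (rule frob_artin_schreier_char_two[OF char])
  ultimately show ?thesis
    using image_fibre_commuting_bij[OF bij_fn[OF bij_frob_char_two[OF char]]] by simp
qed

lemma frob_images_of_fibres:
  assumes images: "\<And>j. (frob ^^ j) ` S = {x. F x = p j}"
    and inj: "inj_on p {..<m}" and period: "p m = p 0" and "S \<noteq> {}" and "0 < m"
  shows "ord_frob S = m"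
    and "\<forall>i<m. \<forall>k<m. i \<noteq> k \<longrightarrow> (frob ^^ i) ` S \<inter> (frob ^^ k) ` S = {}"
proof -
  have S_eq: "S = {x. F x = p 0}"
    using images[of 0] by simp
  have "(frob ^^ j) ` S \<noteq> S" if "0 < j" "j < m" for j
  proof
    assume "(frob ^^ j) ` S = S"
    then have "{x. F x = p j} = {x. F x = p 0}"
      using images[of j] S_eq by simp
    moreover obtain x where "F x = p 0"
      using \<open>S \<noteq> {}\<close> S_eq by blast
    ultimately have "p j = p 0"
      by (metis mem_Collect_eq)
    then show False
      using inj_onD[OF inj, of j 0] that by simp
  qed
  moreover have "(frob ^^ m) ` S = S"
    using images[of m] S_eq period by simp
  ultimately show "ord_frob S = m"
    unfolding ord_frob_def using \<open>0 < m\<close> by (intro Least_equality) (meson not_le)+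
  show "\<forall>i<m. \<forall>k<m. i \<noteq> k \<longrightarrow> (frob ^^ i) ` S \<inter> (frob ^^ k) ` S = {}"
  proof (intro allI impI)
    fix i k
    assume "i < m" "k < m" "i \<noteq> k"
    then have "p i \<noteq> p k"
      using inj by (auto dest: inj_onD)
    then show "(frob ^^ i) ` S \<inter> (frob ^^ k) ` S = {}"
      unfolding images by auto
  qed
qed

lemma card_UN_frob_images:
  assumes "inj (frob :: 'a::field \<Rightarrow> 'a)" and "finite S"
    and "\<forall>i<m. \<forall>k<m. i \<noteq> k \<longrightarrow> (frob ^^ i) ` S \<inter> (frob ^^ k) ` S = {}"
  shows "card (\<Union>k<m. (frob ^^ k) ` (S :: 'a set)) = m * card S"
proof -
  have "card ((frob ^^ k) ` S) = card S" for k
    by (rule card_image) (rule inj_on_subset[OF inj_fn[OF assms(1)] subset_UNIV])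
  then show ?thesis
    using assms(2,3) by (simp add: card_UN_disjoint)
qed

theorem proposition1:
  fixes v :: "nat \<Rightarrow> 'a::{finite,field}" and lm m l :: nat
  assumes "lm \<ge> 1" and "m = 2 ^ lm"
    and "card (UNIV :: 'a set) = 2 ^ m"
    and "cantor_basis m v"
    and "l < m div 2"
  defines "\<Sigma> \<equiv> (\<lambda>u. v (l + m div 2) + u) ` Vspan v l"
  defines "\<Omega> \<equiv> (\<Union>k<m. (frob ^^ k) ` \<Sigma>)"
  shows "ord_frob \<Sigma> = m
         \<and> (\<forall>i<m. \<forall>k<m. i \<noteq> k \<longrightarrow> (frob ^^ i) ` \<Sigma> \<inter> (frob ^^ k) ` \<Sigma> = {})
         \<and> frobenius_partition \<Sigma> \<Omega>
         \<and> card \<Omega> = m * 2 ^ l"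
proof -
  have "m \<ge> 2"
    using power_increasing[OF assms(1), of "2::nat"] assms(2) by simp
  then have char: "(2::'a) = 0"
    using two_eq_zero_if_card_power_of_two[OF assms(3)] by simp
  have images: "(frob ^^ j) ` \<Sigma> = {x. (artin_schreier ^^ l) x = (frob ^^ j) (v (m div 2))}" for j
    unfolding \<Sigma>_def using frob_image_translate_Vspan_cantor_basis[OF assms(4) char] assms(5)
    by simp
  note orbit = frob_orbit_cantor_basis_middle[OF assms(4) char assms(1,2)]
  have "card \<Sigma> = 2 ^ l"
    unfolding \<Sigma>_def using card_Vspan_cantor_basis[OF assms(4)] assms(5)
    by (simp add: card_image)
  then have "\<Sigma> \<noteq> {}" and "finite \<Sigma>"
    by (auto intro: card_ge_0_finite)
  with images orbit \<open>m \<ge> 2\<close> have "ord_frob \<Sigma> = m"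
    and disjoint: "\<forall>i<m. \<forall>k<m. i \<noteq> k \<longrightarrow> (frob ^^ i) ` \<Sigma> \<inter> (frob ^^ k) ` \<Sigma> = {}"
    using frob_images_of_fibres[of \<Sigma> _ "\<lambda>j. (frob ^^ j) (v (m div 2))" m] by simp_all
  moreover have "card \<Omega> = m * 2 ^ l"
    unfolding \<Omega>_def using card_UN_frob_images[OF bij_is_inj[OF bij_frob_char_two[OF char]]
      \<open>finite \<Sigma>\<close> disjoint] \<open>card \<Sigma> = 2 ^ l\<close> by simp
  ultimately show ?thesis
    unfolding frobenius_partition_def \<Omega>_def by simp
qed

end
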